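(* Under the standing assumptions below, suppose $S_1\neq\emptyset$. Then there exists a rank-one idempotent $P\in M_2(\mathbb C)$ such that $\theta(S_1)\subseteq\overline{B}_P(12\delta)\sqcup\overline{B}_{I-P}(12\delta)$ (a disjoint union). Moreover, for $e,f\in S_1$: if $\theta(e),\theta(f)\in\overline B_P(12\delta)$ then $\theta(ef)\in\overline B_P(12\delta)$; if $\theta(e),\theta(f)\in\overline B_{I-P}(12\delta)$ then $\theta(ef)\in\overline B_{I-P}(12\delta)$; if $\theta(e)\in\overline B_P(12\delta)$ and $\theta(f)\in\overline B_{I-P}(12\delta)$ then $ef\in S_0$.
   Context: Standing assumptions: $S$ is a semilattice (commutative semigroup of idempotents), $0\le\delta<0.03$, and $\theta:S\to M_2(\mathbb C)$ satisfies $\|\theta(e)\theta(f)-\theta(ef)\|_{HS}\le\delta$ for all $e,f\in S$, where $\|A\|_{HS}=(\operatorname{tr}(A^*A))^{1/2}$. For $k\in\{0,1,2\}$, $S_k=\{x\in S:\ |\operatorname{tr}\theta(x)-k|<0.95\}$; these sets are pairwise disjoint and cover $S$. $\overline B_A(r)=\{B\in M_2(\mathbb C):\|A-B\|_{HS}\le r\}$. *)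

theory Defs
  imports "HOL-Analysis.Analysis"
begin

type_synonym cmat2 = "complex^2^2"

definition hs_norm :: "cmat2 \<Rightarrow> real" where
  "hs_norm A = sqrt (\<Sum>i\<in>UNIV. \<Sum>j\<in>UNIV. (cmod (A $ i $ j))^2)"

definition hs_cball :: "cmat2 \<Rightarrow> real \<Rightarrow> cmat2 set" where
  "hs_cball A r = {B. hs_norm (A - B) \<le> r}"

definition crank :: "cmat2 \<Rightarrow> nat" where
  "crank A = vec.dim (range (\<lambda>x. A *v x))"

definition Sk :: "('a \<Rightarrow> cmat2) \<Rightarrow> nat \<Rightarrow> 'a set" where
  "Sk \<theta> k = {x. cmod (trace (\<theta> x) - of_nat k) < 0.95}"

end

theory Submission
  imports Defs
begin

text \<open>A \<open>2 \<times> 2\<close> matrix \<open>X\<close> with \<open>\<parallel>X\<^sup>2 - X\<parallel> \<le> \<epsilon>\<close> has both eigenvalues near \<open>0\<close> or \<open>1\<close>, so its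
  trace is near \<open>0\<close>, \<open>1\<close> or \<open>2\<close>; this makes the \<open>S\<^sub>k\<close> a partition, and if \<open>y \<le> x\<close> in the
  semilattice then \<open>\<theta> x - \<theta> y\<close> is again an approximate idempotent, so the index \<open>k\<close> is monotone.
  Fix \<open>e\<^sub>0 \<in> S\<^sub>1\<close> and round \<open>\<theta> e\<^sub>0\<close> to an exact rank-one idempotent \<open>P\<close>.  For \<open>x \<in> S\<^sub>1\<close>,
  the element \<open>e\<^sub>0 x\<close> lies in \<open>S\<^sub>1\<close> or \<open>S\<^sub>0\<close>: in the first case
  \<open>\<theta> x \<approx> \<theta> (e\<^sub>0 x) \<approx> \<theta> e\<^sub>0 \<approx> P\<close>, in the second \<open>\<theta> x \<theta> e\<^sub>0 \<approx> 0\<close> forces \<open>\<theta> x \<approx> I - P\<close>.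
  Since \<open>\<parallel>I - 2P\<parallel> \<ge> \<surd>2\<close> the two balls are disjoint, and the multiplicative statements follow by
  comparing \<open>\<theta> e\<^sub>0\<close> with \<open>I - \<theta> e\<^sub>0\<close> along the same chains.\<close>

section \<open>Approximate idempotents in \<open>M\<^sub>2(\<complex>)\<close>\<close>

lemma hs_norm_eq_norm: "hs_norm A = norm A"
  unfolding hs_norm_def norm_vec_def L2_set_def by (simp add: sum_nonneg)

lemma hs_cball_eq_cball: "hs_cball A r = cball A r"
  by (auto simp: hs_cball_def cball_def dist_norm hs_norm_eq_norm)

lemma dist_complement: "dist (c - a) (c - b) = dist a (b :: 'a :: real_normed_vector)"
  by (simp add: dist_norm norm_minus_commute)

lemma cmat2_mult_nth: "((A::cmat2) ** B)$i$j = A$i$1 * B$1$j + A$i$2 * B$2$j"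
  by (simp add: matrix_matrix_mult_def sum_2)

lemma trace_cmat2: "trace (A::cmat2) = A$1$1 + A$2$2"
  by (simp add: trace_def sum_2)

lemma mat_one_cmat2_nth: "(mat 1 :: cmat2)$i$j = (if i = j then 1 else 0)"
  by (simp add: mat_def)

lemma norm_cmat2_sq:
  "(norm (A::cmat2))^2 = (cmod (A$1$1))^2 + (cmod (A$1$2))^2 + (cmod (A$2$1))^2 + (cmod (A$2$2))^2"
  unfolding hs_norm_eq_norm[symmetric] hs_norm_def by (simp add: sum_2 sum_nonneg)

lemma cmod_parallelogram: "(cmod (u + v))^2 + (cmod (u - v))^2 = 2 * (cmod u)^2 + 2 * (cmod v)^2"
  unfolding cmod_power2 by (simp add: power2_eq_square algebra_simps)

text \<open>For \<open>X = [[a, b], [c, d]]\<close> the traceless part \<open>X - (tr X / 2) I\<close> is \<open>[[\<alpha>, b], [c, -\<alpha>]]\<close>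
  with \<open>\<alpha> = (a - d) / 2\<close>. Its squared norm is \<open>traceless_sqnorm X\<close> and minus its determinant is
  \<open>traceless_disc X = (tr X)\<^sup>2 / 4 - det X\<close>, so the eigenvalues of \<open>X\<close> are
  \<open>tr X / 2 \<plusminus> \<surd>(traceless_disc X)\<close>.\<close>

definition half_diag_gap :: "cmat2 \<Rightarrow> complex" where
  "half_diag_gap X = (X$1$1 - X$2$2) / 2"

definition traceless_disc :: "cmat2 \<Rightarrow> complex" where
  "traceless_disc X = (half_diag_gap X)^2 + X$1$2 * X$2$1"

definition traceless_sqnorm :: "cmat2 \<Rightarrow> real" where
  "traceless_sqnorm X = 2 * (cmod (half_diag_gap X))^2 + (cmod (X$1$2))^2 + (cmod (X$2$1))^2"

lemma norm_sq_trace_traceless: "(norm X)^2 = (cmod (trace X))^2 / 2 + traceless_sqnorm X"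
proof -
  have "(cmod (X$1$1 + X$2$2))^2 + (cmod (X$1$1 - X$2$2))^2 = 2 * (cmod (X$1$1))^2 + 2 * (cmod (X$2$2))^2"
    by (rule cmod_parallelogram)
  moreover have "(cmod (half_diag_gap X))^2 = (cmod (X$1$1 - X$2$2))^2 / 4"
    by (simp add: half_diag_gap_def norm_divide power_divide)
  ultimately show ?thesis
    unfolding norm_cmat2_sq traceless_sqnorm_def trace_cmat2 by simp
qed

lemma traceless_disc_le: "2 * cmod (traceless_disc X) \<le> traceless_sqnorm X"
proof -
  have "cmod (traceless_disc X) \<le> (cmod (half_diag_gap X))^2 + cmod (X$1$2) * cmod (X$2$1)"
    unfolding traceless_disc_def by (metis norm_mult norm_power norm_triangle_ineq)
  moreover have "2 * (cmod (X$1$2) * cmod (X$2$1)) \<le> (cmod (X$1$2))^2 + (cmod (X$2$1))^2"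
    using sum_squares_bound[of "cmod (X$1$2)" "cmod (X$2$1)"] by simp
  ultimately show ?thesis unfolding traceless_sqnorm_def by linarith
qed

lemma cmod_double_sq: "(cmod (2 * z))^2 / 2 = 2 * (cmod z)^2"
  by (simp add: norm_mult power_mult_distrib)

lemma idem_defect_norm_sq:
  "(norm (X ** X - X))^2 = 2 * (cmod ((trace X)^2 / 4 - trace X / 2 + traceless_disc X))^2
     + (cmod (trace X - 1))^2 * traceless_sqnorm X"
proof -
  let ?Y = "X ** X - X" and ?t = "trace X"
  have t: "trace ?Y = 2 * (?t^2 / 4 - ?t / 2 + traceless_disc X)"
    by (simp add: trace_cmat2 cmat2_mult_nth traceless_disc_def half_diag_gap_def
        power2_eq_square field_simps)
  have a: "half_diag_gap ?Y = (?t - 1) * half_diag_gap X"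
    by (simp add: trace_cmat2 cmat2_mult_nth half_diag_gap_def field_simps)
  have b: "?Y$1$2 = (?t - 1) * X$1$2" and c: "?Y$2$1 = (?t - 1) * X$2$1"
    by (simp_all add: trace_cmat2 cmat2_mult_nth algebra_simps)
  have "traceless_sqnorm ?Y = (cmod (?t - 1))^2 * traceless_sqnorm X"
    unfolding traceless_sqnorm_def a b c norm_mult power_mult_distrib by (simp add: algebra_simps)
  then show ?thesis unfolding norm_sq_trace_traceless t cmod_double_sq by simp
qed

lemma reflection_norm_sq:
  "(norm (mat 1 - X - X))^2 = 2 * (cmod (1 - trace X))^2 + 4 * traceless_sqnorm X"
proof -
  let ?Y = "mat 1 - X - X"
  have t: "trace ?Y = 2 * (1 - trace X)" by (simp add: trace_cmat2 mat_one_cmat2_nth)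
  have "half_diag_gap ?Y = -2 * half_diag_gap X" "?Y$1$2 = -2 * X$1$2" "?Y$2$1 = -2 * X$2$1"
    by (simp_all add: mat_one_cmat2_nth half_diag_gap_def field_simps)
  then have "traceless_sqnorm ?Y = 4 * traceless_sqnorm X"
    unfolding traceless_sqnorm_def norm_mult power_mult_distrib by simp
  then show ?thesis unfolding norm_sq_trace_traceless t cmod_double_sq by simp
qed

text \<open>\<open>s \<ge> 0\<close> is the part of \<open>\<parallel>X\<parallel>\<^sup>2\<close> not accounted for by the eigenvalues (the strictly
  triangular part of a Schur form of \<open>X\<close>).\<close>
lemma eigenvalue_decomposition:
  obtains \<mu>1 \<mu>2 s where "0 \<le> s" "trace X = \<mu>1 + \<mu>2" "traceless_disc X = ((\<mu>1 - \<mu>2) / 2)^2"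
    "(norm X)^2 = (cmod \<mu>1)^2 + (cmod \<mu>2)^2 + s"
    "(norm (X ** X - X))^2
       = (cmod (\<mu>1^2 - \<mu>1))^2 + (cmod (\<mu>2^2 - \<mu>2))^2 + (cmod (\<mu>1 + \<mu>2 - 1))^2 * s"
    "(norm (mat 1 - X - X))^2 = (cmod (1 - 2 * \<mu>1))^2 + (cmod (1 - 2 * \<mu>2))^2 + 4 * s"
proof -
  define t where "t = trace X"
  define w where "w = csqrt (traceless_disc X)"
  define c where "c = t^2 / 4 - t / 2 + traceless_disc X"
  define s where "s = traceless_sqnorm X - 2 * cmod (traceless_disc X)"
  have ww: "w^2 = traceless_disc X" and nw: "(cmod w)^2 = cmod (traceless_disc X)"
    by (simp_all add: w_def)
  have "0 \<le> s" unfolding s_def using traceless_disc_le[of X] by simp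
  moreover have "trace X = (t/2 + w) + (t/2 - w)" by (simp add: t_def)
  moreover have "traceless_disc X = (((t/2 + w) - (t/2 - w)) / 2)^2" using ww by simp
  moreover have "(norm X)^2 = (cmod (t/2 + w))^2 + (cmod (t/2 - w))^2 + s"
    using norm_sq_trace_traceless[of X] cmod_parallelogram[of "t/2" w] nw
    by (simp add: s_def t_def norm_divide power_divide)
  moreover have "(norm (X ** X - X))^2 = (cmod ((t/2 + w)^2 - (t/2 + w)))^2
      + (cmod ((t/2 - w)^2 - (t/2 - w)))^2 + (cmod ((t/2 + w) + (t/2 - w) - 1))^2 * s"
  proof -
    have m: "(t/2 + w)^2 - (t/2 + w) = c + (t - 1) * w" "(t/2 - w)^2 - (t/2 - w) = c - (t - 1) * w"
      unfolding c_def using ww by (simp_all add: power2_eq_square field_simps)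
    have "(cmod ((t - 1) * w))^2 = (cmod (t - 1))^2 * cmod (traceless_disc X)"
      unfolding norm_mult power_mult_distrib nw ..
    then have "(norm (X ** X - X))^2 = 2 * (cmod c)^2 + 2 * (cmod ((t - 1) * w))^2 + (cmod (t - 1))^2 * s"
      using idem_defect_norm_sq[of X] by (simp add: s_def c_def t_def algebra_simps)
    also have "\<dots> = (cmod (c + (t - 1) * w))^2 + (cmod (c - (t - 1) * w))^2 + (cmod (t - 1))^2 * s"
      using cmod_parallelogram[of c "(t - 1) * w"] by simp
    finally show ?thesis unfolding m by simp
  qed
  moreover have "(norm (mat 1 - X - X))^2
      = (cmod (1 - 2 * (t/2 + w)))^2 + (cmod (1 - 2 * (t/2 - w)))^2 + 4 * s"
  proof -
    have "(cmod (2 * w))^2 = 4 * cmod (traceless_disc X)"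
      unfolding norm_mult power_mult_distrib nw by simp
    then show ?thesis
      using reflection_norm_sq[of X] cmod_parallelogram[of "1 - t" "2 * w"]
      by (simp add: s_def t_def algebra_simps)
  qed
  ultimately show ?thesis by (rule that)
qed

lemma crank_outer_product:
  fixes M :: cmat2 and v w :: "complex^2"
  assumes M: "\<And>i j. M$i$j = v$i * w$j" and "v \<noteq> 0" and wv: "w$1 * v$1 + w$2 * v$2 = 1"
  shows "crank M = 1"
proof -
  have Mx: "M *v x = (w$1 * x$1 + w$2 * x$2) *s v" for x
    by (simp add: vec_eq_iff matrix_vector_mult_def sum_2 M algebra_simps)
  have "range (\<lambda>x. M *v x) = vec.span {v}"
  proof (intro subset_antisym subsetI)
    fix y assume "y \<in> range (\<lambda>x. M *v x)"
    then obtain x where "y = M *v x" by blast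
    then show "y \<in> vec.span {v}" unfolding Mx vec.span_singleton by blast
  next
    fix y assume "y \<in> vec.span {v}"
    then obtain k where y: "y = k *s v" by (auto simp: vec.span_singleton)
    have "M *v y = y"
      using wv by (simp add: y Mx vec_eq_iff algebra_simps)
        (metis distrib_left mult.assoc mult.commute mult.right_neutral)
    then show "y \<in> range (\<lambda>x. M *v x)" by (metis rangeI)
  qed
  moreover have "vec.independent {v}"
    using \<open>v \<noteq> 0\<close> by (simp add: vec.independent_insert)
  ultimately show ?thesis
    unfolding crank_def by (simp add: vec.dim_span_eq_card_independent)
qed

lemma crank_eq_1_if_trace_det:
  fixes M :: cmat2
  assumes tr: "M$1$1 + M$2$2 = 1" and det: "M$1$1 * M$2$2 = M$1$2 * M$2$1"
  shows "crank M = 1"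
proof (cases "M$1$1 = 0")
  case False
  define v :: "complex^2" where "v = vector [M$1$1, M$2$1]"
  define w :: "complex^2" where "w = vector [1, M$1$2 / M$1$1]"
  have d: "M$2$2 = M$1$2 * M$2$1 / M$1$1" using det False by (simp add: field_simps)
  show ?thesis
  proof (rule crank_outer_product[of M v w])
    show "M$i$j = v$i * w$j" for i j
      using exhaust_2[of i] exhaust_2[of j] False d by (auto simp: v_def w_def)
    show "v \<noteq> 0"
    proof
      assume "v = 0"
      then have "v$1 = 0" by simp
      with False show False by (simp add: v_def)
    qed
    show "w$1 * v$1 + w$2 * v$2 = 1" using tr d False by (simp add: v_def w_def field_simps)
  qed
next
  case True
  then have d: "M$2$2 = 1" and bc: "M$1$2 * M$2$1 = 0" using tr det by auto
  define v :: "complex^2" where "v = vector [M$1$2, 1]"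
  define w :: "complex^2" where "w = vector [M$2$1, 1]"
  show ?thesis
  proof (rule crank_outer_product[of M v w])
    show "M$i$j = v$i * w$j" for i j
      using exhaust_2[of i] exhaust_2[of j] True d bc by (auto simp: v_def w_def)
    show "v \<noteq> 0"
    proof
      assume "v = 0"
      then have "v$2 = 0" by simp
      then show False by (simp add: v_def)
    qed
    show "w$1 * v$1 + w$2 * v$2 = 1" using bc by (simp add: v_def w_def algebra_simps)
  qed
qed

lemma cmod_diff_one_ge: "1 - cmod \<mu> \<le> cmod (\<mu> - 1)"
  using norm_triangle_ineq2[of 1 \<mu>] by (simp add: norm_minus_commute)

lemma cmod_sq_diff_self: "cmod (\<mu>^2 - \<mu>) = cmod \<mu> * cmod (\<mu> - 1)"
proof -
  have "\<mu>^2 - \<mu> = \<mu> * (\<mu> - 1)" by (simp add: power2_eq_square algebra_simps)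
  then show ?thesis by (simp add: norm_mult)
qed

lemma le_if_logistic_le:
  fixes x r :: real
  assumes "x * (1 - x) \<le> r * (1 - r)" "x \<le> 1/2" "r \<le> 1/2"
  shows "x \<le> r"
proof (rule ccontr)
  assume "\<not> x \<le> r"
  then have "0 < (x - r) * (1 - x - r)" using assms(2,3) by (intro mult_pos_pos) auto
  then show False using assms(1) by (simp add: algebra_simps)
qed

lemma small_root_bound:
  assumes prod: "cmod \<mu> * cmod (\<mu> - 1) \<le> \<epsilon>" and half: "cmod \<mu> \<le> 1/2"
    and r: "r \<le> 1/2" "\<epsilon> \<le> r * (1 - r)"
  shows "cmod \<mu> \<le> r" "(1 - r) * cmod \<mu> \<le> cmod (\<mu>^2 - \<mu>)"
proof -
  have far: "1 - cmod \<mu> \<le> cmod (\<mu> - 1)" by (rule cmod_diff_one_ge)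
  have "cmod \<mu> * (1 - cmod \<mu>) \<le> cmod \<mu> * cmod (\<mu> - 1)"
    using far by (rule mult_left_mono) simp
  then show small: "cmod \<mu> \<le> r"
    using prod r(2) by (intro le_if_logistic_le[OF _ half r(1)]) linarith
  have "1 - r \<le> cmod (\<mu> - 1)" using far small by linarith
  then have "(1 - r) * cmod \<mu> \<le> cmod (\<mu> - 1) * cmod \<mu>"
    by (rule mult_right_mono) simp
  then show "(1 - r) * cmod \<mu> \<le> cmod (\<mu>^2 - \<mu>)"
    by (simp add: cmod_sq_diff_self mult.commute)
qed

lemma eigenvalue_near_0_or_1:
  assumes prod: "cmod (\<mu>^2 - \<mu>) \<le> \<epsilon>" and r: "r \<le> 1/2" "\<epsilon> \<le> r * (1 - r)"
  obtains j :: nat where "j \<in> {0, 1}" "cmod (\<mu> - of_nat j) \<le> r"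
    "(1 - r) * cmod (\<mu> - of_nat j) \<le> cmod (\<mu>^2 - \<mu>)"
proof -
  have p: "cmod \<mu> * cmod (\<mu> - 1) \<le> \<epsilon>" using prod by (simp add: cmod_sq_diff_self)
  have "cmod \<mu> \<le> 1/2 \<or> cmod (\<mu> - 1) \<le> 1/2"
  proof (rule ccontr)
    assume "\<not> ?thesis"
    then have "1/2 < cmod \<mu>" "1/2 < cmod (\<mu> - 1)" by auto
    then have "1/2 * (1/2) < cmod \<mu> * cmod (\<mu> - 1)" by (intro mult_strict_mono) linarith+
    moreover have "r * (1 - r) \<le> 1/4"
      using zero_le_power2[of "r - 1/2"] by (simp add: power2_eq_square algebra_simps)
    ultimately show False using p r by linarith
  qed
  then show ?thesis
  proof
    assume "cmod \<mu> \<le> 1/2"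
    from small_root_bound[OF p this r] show ?thesis by (intro that[of 0]) simp_all
  next
    assume "cmod (\<mu> - 1) \<le> 1/2"
    then have half: "cmod (1 - \<mu>) \<le> 1/2" by (simp add: norm_minus_commute)
    have "cmod (1 - \<mu>) * cmod ((1 - \<mu>) - 1) \<le> \<epsilon>"
      using p by (simp add: norm_minus_commute mult.commute)
    note bounds = small_root_bound[OF this half r]
    have flip: "cmod (1 - \<mu>) = cmod (\<mu> - of_nat 1)" "(1 - \<mu>)^2 - (1 - \<mu>) = \<mu>^2 - \<mu>"
      by (simp_all add: norm_minus_commute power2_eq_square algebra_simps)
    from bounds show ?thesis unfolding flip by (intro that[of 1]) simp_all
  qed
qed

lemma approx_idempotent_spectrum:
  assumes defect: "norm (X ** X - X) \<le> \<epsilon>" and r: "r \<le> 1/2" "\<epsilon> \<le> r * (1 - r)"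
  obtains \<mu>1 \<mu>2 s and j1 j2 :: nat where "0 \<le> s" "trace X = \<mu>1 + \<mu>2"
    "traceless_disc X = ((\<mu>1 - \<mu>2) / 2)^2"
    "(norm X)^2 = (cmod \<mu>1)^2 + (cmod \<mu>2)^2 + s"
    "(norm (mat 1 - X - X))^2 = (cmod (1 - 2 * \<mu>1))^2 + (cmod (1 - 2 * \<mu>2))^2 + 4 * s"
    "j1 \<in> {0, 1}" "j2 \<in> {0, 1}" "cmod (\<mu>1 - of_nat j1) \<le> r" "cmod (\<mu>2 - of_nat j2) \<le> r"
    "(1 - r)^2 * ((cmod (\<mu>1 - of_nat j1))^2 + (cmod (\<mu>2 - of_nat j2))^2)
       + (cmod (\<mu>1 + \<mu>2 - 1))^2 * s \<le> \<epsilon>^2"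
proof -
  obtain \<mu>1 \<mu>2 s where s: "0 \<le> s" and spec: "trace X = \<mu>1 + \<mu>2"
      "traceless_disc X = ((\<mu>1 - \<mu>2) / 2)^2" "(norm X)^2 = (cmod \<mu>1)^2 + (cmod \<mu>2)^2 + s"
      "(norm (mat 1 - X - X))^2 = (cmod (1 - 2 * \<mu>1))^2 + (cmod (1 - 2 * \<mu>2))^2 + 4 * s"
    and defect_eq: "(norm (X ** X - X))^2
       = (cmod (\<mu>1^2 - \<mu>1))^2 + (cmod (\<mu>2^2 - \<mu>2))^2 + (cmod (\<mu>1 + \<mu>2 - 1))^2 * s"
    by (rule eigenvalue_decomposition)
  have \<epsilon>: "0 \<le> \<epsilon>" using defect norm_ge_zero order_trans by blast
  have total: "(cmod (\<mu>1^2 - \<mu>1))^2 + (cmod (\<mu>2^2 - \<mu>2))^2 + (cmod (\<mu>1 + \<mu>2 - 1))^2 * s \<le> \<epsilon>^2"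
    using defect_eq power_mono[OF defect norm_ge_zero, of 2] by simp
  have "0 \<le> (cmod (\<mu>1 + \<mu>2 - 1))^2 * s" using s by simp
  then have "(cmod (\<mu>1^2 - \<mu>1))^2 \<le> \<epsilon>^2" "(cmod (\<mu>2^2 - \<mu>2))^2 \<le> \<epsilon>^2"
    using total zero_le_power2[of "cmod (\<mu>1^2 - \<mu>1)"] zero_le_power2[of "cmod (\<mu>2^2 - \<mu>2)"]
    by linarith+
  then have "cmod (\<mu>1^2 - \<mu>1) \<le> \<epsilon>" "cmod (\<mu>2^2 - \<mu>2) \<le> \<epsilon>"
    using \<epsilon> power2_le_imp_le by blast+
  then obtain j1 j2 :: nat where j1: "j1 \<in> {0, 1}" "cmod (\<mu>1 - of_nat j1) \<le> r"
      "(1 - r) * cmod (\<mu>1 - of_nat j1) \<le> cmod (\<mu>1^2 - \<mu>1)"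
    and j2: "j2 \<in> {0, 1}" "cmod (\<mu>2 - of_nat j2) \<le> r"
      "(1 - r) * cmod (\<mu>2 - of_nat j2) \<le> cmod (\<mu>2^2 - \<mu>2)"
    using eigenvalue_near_0_or_1 r by metis
  have "(1 - r)^2 * (cmod (\<mu>1 - of_nat j1))^2 \<le> (cmod (\<mu>1^2 - \<mu>1))^2"
    "(1 - r)^2 * (cmod (\<mu>2 - of_nat j2))^2 \<le> (cmod (\<mu>2^2 - \<mu>2))^2"
    using power_mono[OF j1(3)] power_mono[OF j2(3)] r by (simp_all add: power_mult_distrib)
  then show ?thesis
    using that[OF s spec j1(1) j2(1) j1(2) j2(2)] total by (simp add: distrib_left)
qed

lemma deviation_sum_le:
  fixes d1 d2 t \<epsilon> r c :: real
  assumes "(1 - r)^2 * (d1^2 + d2^2) + t \<le> \<epsilon>^2" "0 \<le> t"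
    and "2 * \<epsilon>^2 \<le> ((1 - r) * c)^2" "r < 1" "0 \<le> c"
  shows "d1 + d2 \<le> c"
proof -
  have "(d1 + d2)^2 \<le> 2 * (d1^2 + d2^2)"
    using sum_squares_bound[of d1 d2] by (simp add: power2_sum)
  then have "(1 - r)^2 * (d1 + d2)^2 \<le> (1 - r)^2 * (2 * (d1^2 + d2^2))"
    by (rule mult_left_mono) simp
  then have "((1 - r) * (d1 + d2))^2 \<le> 2 * ((1 - r)^2 * (d1^2 + d2^2))"
    by (simp only: power_mult_distrib ac_simps)
  also have "\<dots> \<le> ((1 - r) * c)^2" using assms(1-3) by linarith
  finally have "(1 - r) * (d1 + d2) \<le> (1 - r) * c"
    by (rule power2_le_imp_le) (use assms(4,5) in simp)
  then show ?thesis using assms(4) by simp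
qed

lemma of_nat_eq_if_close:
  assumes "cmod (z - of_nat j) + cmod (z - of_nat k) < 1"
  shows "j = k"
proof -
  have "cmod (of_int (int k - int j) :: complex) \<le> cmod (z - of_nat j) + cmod (z - of_nat k)"
    using norm_triangle_ineq4[of "z - of_nat j" "z - of_nat k"] by simp
  then have "\<bar>real_of_int (int k - int j)\<bar> < 1" using assms by (simp only: norm_of_int)
  then show ?thesis by linarith
qed

lemma trace_eigen_deviation:
  assumes "trace X = \<mu>1 + \<mu>2"
  shows "cmod (trace X - of_nat (j1 + j2)) \<le> cmod (\<mu>1 - of_nat j1) + cmod (\<mu>2 - of_nat j2)"
  using norm_triangle_ineq[of "\<mu>1 - of_nat j1" "\<mu>2 - of_nat j2"] assms
  by (simp add: algebra_simps)

lemma trace_near_integer: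
  fixes X :: cmat2
  assumes defect: "norm (X ** X - X) \<le> \<epsilon>" and r: "r \<le> 1/2" "\<epsilon> \<le> r * (1 - r)"
    and c: "2 * \<epsilon>^2 \<le> ((1 - r) * c)^2" "0 \<le> c"
  shows "\<exists>k\<in>{0, 1, 2}. cmod (trace X - of_nat k) \<le> c"
proof -
  obtain \<mu>1 \<mu>2 s and j1 j2 :: nat where s: "0 \<le> s" and tr: "trace X = \<mu>1 + \<mu>2"
    and j: "j1 \<in> {0, 1}" "j2 \<in> {0, 1}"
    and bound: "(1 - r)^2 * ((cmod (\<mu>1 - of_nat j1))^2 + (cmod (\<mu>2 - of_nat j2))^2)
       + (cmod (\<mu>1 + \<mu>2 - 1))^2 * s \<le> \<epsilon>^2"
    by (rule approx_idempotent_spectrum[OF defect r])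
  have "cmod (trace X - of_nat (j1 + j2)) \<le> c"
    using trace_eigen_deviation[OF tr, of j1 j2] deviation_sum_le[OF bound _ c(1) _ c(2)] s r
    by simp
  moreover have "j1 + j2 \<in> {0, 1, 2}" using j by auto
  ultimately show ?thesis by blast
qed

lemma trace_near_one:
  fixes X :: cmat2
  assumes defect: "norm (X ** X - X) \<le> \<epsilon>" and r: "r \<le> 1/2" "\<epsilon> \<le> r * (1 - r)"
    and c: "2 * \<epsilon>^2 \<le> ((1 - r) * c)^2" "0 \<le> c" and one: "cmod (trace X - 1) < 1 - c"
  shows "cmod (trace X - 1) \<le> c" "cmod (4 * traceless_disc X - 1) \<le> c * (2 + c)"
proof -
  obtain \<mu>1 \<mu>2 s and j1 j2 :: nat where s: "0 \<le> s" and tr: "trace X = \<mu>1 + \<mu>2"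
    and disc: "traceless_disc X = ((\<mu>1 - \<mu>2) / 2)^2" and j: "j1 \<in> {0, 1}" "j2 \<in> {0, 1}"
    and bound: "(1 - r)^2 * ((cmod (\<mu>1 - of_nat j1))^2 + (cmod (\<mu>2 - of_nat j2))^2)
       + (cmod (\<mu>1 + \<mu>2 - 1))^2 * s \<le> \<epsilon>^2"
    by (rule approx_idempotent_spectrum[OF defect r])
  define u where "u = (\<mu>1 - of_nat j1) - (\<mu>2 - of_nat j2)"
  define d where "d = cmod (\<mu>1 - of_nat j1) + cmod (\<mu>2 - of_nat j2)"
  have d: "d \<le> c" unfolding d_def using deviation_sum_le[OF bound _ c(1) _ c(2)] s r by simp
  have u: "cmod u \<le> d" unfolding u_def d_def by (rule norm_triangle_ineq4)
  have close: "cmod (trace X - of_nat (j1 + j2)) \<le> d"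
    unfolding d_def by (rule trace_eigen_deviation[OF tr])
  then have "cmod (trace X - of_nat (j1 + j2)) + cmod (trace X - of_nat 1) < 1" using one d by simp
  then have "j1 + j2 = 1" by (rule of_nat_eq_if_close)
  with close d show "cmod (trace X - 1) \<le> c" by simp
  define \<sigma> :: complex where "\<sigma> = of_nat j1 - of_nat j2"
  have \<sigma>: "\<sigma>^2 = 1" "cmod \<sigma> = 1"
    using \<open>j1 + j2 = 1\<close> j by (auto simp: \<sigma>_def)
  have "\<mu>1 - \<mu>2 = u + \<sigma>" by (simp add: u_def \<sigma>_def)
  then have "4 * traceless_disc X - 1 = (u + \<sigma>)^2 - \<sigma>^2"
    using \<sigma>(1) by (simp add: disc power_divide)
  also have "\<dots> = u * (u + 2 * \<sigma>)" by (simp add: power2_eq_square algebra_simps)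
  finally have "4 * traceless_disc X - 1 = u * (u + 2 * \<sigma>)" .
  then have "cmod (4 * traceless_disc X - 1) \<le> cmod u * (cmod u + 2)"
    using norm_triangle_ineq[of u "2 * \<sigma>"] \<sigma>(2)
    by (simp add: norm_mult mult_left_mono)
  also have "\<dots> \<le> c * (2 + c)"
    using u d norm_ge_zero[of u] by (intro mult_mono) linarith+
  finally show "cmod (4 * traceless_disc X - 1) \<le> c * (2 + c)" .
qed

lemma cmod_one_minus_double_ge:
  assumes "j \<in> {0, 1 :: nat}"
  shows "1 - 2 * cmod (\<mu> - of_nat j) \<le> cmod (1 - 2 * \<mu>)"
proof -
  have "cmod (1 - 2 * of_nat j :: complex) - cmod (2 * (\<mu> - of_nat j))
      \<le> cmod ((1 - 2 * of_nat j) - 2 * (\<mu> - of_nat j))"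
    by (rule norm_triangle_ineq2)
  moreover have "cmod (1 - 2 * of_nat j :: complex) = 1" using assms by auto
  moreover have "cmod (2 * (\<mu> - of_nat j)) = 2 * cmod (\<mu> - of_nat j)" by (simp only: norm_mult) simp
  moreover have "(1 - 2 * of_nat j) - 2 * (\<mu> - of_nat j) = 1 - 2 * \<mu>" by (simp add: algebra_simps)
  ultimately show ?thesis by simp
qed

lemma approx_idempotent_reflection_far:
  fixes X :: cmat2
  assumes defect: "norm (X ** X - X) \<le> \<epsilon>" and r: "r \<le> 1/2" "\<epsilon> \<le> r * (1 - r)"
  shows "2 * (1 - 2 * r)^2 \<le> (norm (mat 1 - X - X))^2"
proof -
  obtain \<mu>1 \<mu>2 s and j1 j2 :: nat where s: "0 \<le> s"
    and refl: "(norm (mat 1 - X - X))^2 = (cmod (1 - 2 * \<mu>1))^2 + (cmod (1 - 2 * \<mu>2))^2 + 4 * s"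
    and j: "j1 \<in> {0, 1}" "j2 \<in> {0, 1}" "cmod (\<mu>1 - of_nat j1) \<le> r" "cmod (\<mu>2 - of_nat j2) \<le> r"
    by (rule approx_idempotent_spectrum[OF defect r])
  have "1 - 2 * r \<le> cmod (1 - 2 * \<mu>1)" "1 - 2 * r \<le> cmod (1 - 2 * \<mu>2)"
    using cmod_one_minus_double_ge[OF j(1), of \<mu>1] cmod_one_minus_double_ge[OF j(2), of \<mu>2] j(3,4)
    by linarith+
  then have "(1 - 2 * r)^2 \<le> (cmod (1 - 2 * \<mu>1))^2" "(1 - 2 * r)^2 \<le> (cmod (1 - 2 * \<mu>2))^2"
    using r by (simp_all add: power_mono)
  then show ?thesis using refl s by linarith
qed

lemma approx_idempotent_norm_le:
  fixes X :: cmat2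
  assumes defect: "norm (X ** X - X) \<le> \<epsilon>" and r: "r \<le> 1/2" "\<epsilon> \<le> r * (1 - r)"
    and tr: "cmod (trace X) \<le> T" "T + 2 * r < 1"
    and m: "0 < m" "m \<le> 1 - r" "m \<le> 1 - T"
  shows "norm X \<le> \<epsilon> / m"
proof -
  obtain \<mu>1 \<mu>2 s and j1 j2 :: nat where s: "0 \<le> s" and tr_eq: "trace X = \<mu>1 + \<mu>2"
    and norm_eq: "(norm X)^2 = (cmod \<mu>1)^2 + (cmod \<mu>2)^2 + s"
    and j: "j1 \<in> {0, 1}" "j2 \<in> {0, 1}" "cmod (\<mu>1 - of_nat j1) \<le> r" "cmod (\<mu>2 - of_nat j2) \<le> r"
    and bound: "(1 - r)^2 * ((cmod (\<mu>1 - of_nat j1))^2 + (cmod (\<mu>2 - of_nat j2))^2)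
       + (cmod (\<mu>1 + \<mu>2 - 1))^2 * s \<le> \<epsilon>^2"
    by (rule approx_idempotent_spectrum[OF defect r])
  have "0 \<le> \<epsilon>" using defect norm_ge_zero order_trans by blast
  have "cmod (trace X - of_nat (j1 + j2)) + cmod (trace X - of_nat 0) < 1"
    using trace_eigen_deviation[OF tr_eq, of j1 j2] j(3,4) tr by simp
  then have "j1 + j2 = 0" by (rule of_nat_eq_if_close)
  then have bound': "(1 - r)^2 * ((cmod \<mu>1)^2 + (cmod \<mu>2)^2) + (cmod (\<mu>1 + \<mu>2 - 1))^2 * s \<le> \<epsilon>^2"
    using bound by simp
  have "m \<le> cmod (\<mu>1 + \<mu>2 - 1)" using cmod_diff_one_ge[of "trace X"] tr m tr_eq by simp
  then have "m^2 \<le> (cmod (\<mu>1 + \<mu>2 - 1))^2" using m(1) by (intro power_mono) simp_all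
  then have s_part: "m^2 * s \<le> (cmod (\<mu>1 + \<mu>2 - 1))^2 * s" using s by (rule mult_right_mono)
  have "m^2 \<le> (1 - r)^2" using m by (intro power_mono) simp_all
  then have eig_part: "m^2 * ((cmod \<mu>1)^2 + (cmod \<mu>2)^2) \<le> (1 - r)^2 * ((cmod \<mu>1)^2 + (cmod \<mu>2)^2)"
    by (rule mult_right_mono) simp
  have "(m * norm X)^2 = m^2 * ((cmod \<mu>1)^2 + (cmod \<mu>2)^2) + m^2 * s"
    unfolding power_mult_distrib norm_eq by (simp add: distrib_left)
  then have "(m * norm X)^2 \<le> \<epsilon>^2" using s_part eig_part bound' by linarith
  then have "m * norm X \<le> \<epsilon>"
    using \<open>0 \<le> \<epsilon>\<close> by (rule power2_le_imp_le)
  then show ?thesis using m(1) by (simp add: pos_le_divide_eq mult.commute)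
qed

section \<open>Rounding to a rank-one idempotent\<close>

lemma small_quadratic_root:
  fixes a \<eta> :: complex and n :: real
  assumes "0 < n"
  obtains q where "a * q^2 + of_real n * q = \<eta>" "cmod q * n \<le> 2 * cmod \<eta>"
proof -
  define \<rho> where "\<rho> = csqrt ((of_real n)^2 + 4 * a * \<eta>)"
  define D where "D = of_real n + \<rho>"
  have "0 \<le> Re \<rho>" unfolding \<rho>_def by (rule Re_csqrt)
  then have "n \<le> Re D" by (simp add: D_def)
  then have nD: "n \<le> cmod D" using abs_Re_le_cmod[of D] by linarith
  then have D: "D \<noteq> 0" using assms by auto
  define q where "q = 2 * \<eta> / D"
  have qD: "q * D = 2 * \<eta>" using D by (simp add: q_def)
  have "D^2 * (a * q^2 + of_real n * q - \<eta>) = a * (q * D)^2 + of_real n * (q * D) * D - \<eta> * D^2"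
    by (simp add: power2_eq_square algebra_simps)
  also have "\<dots> = a * (2 * \<eta>)^2 + of_real n * (2 * \<eta>) * D - \<eta> * D^2"
    by (simp only: qD)
  also have "\<dots> = a * (2 * \<eta>)^2 + of_real n * (2 * \<eta>) * (of_real n + \<rho>)
      - \<eta> * ((of_real n)^2 + 2 * of_real n * \<rho> + \<rho>^2)"
    by (simp add: D_def power2_eq_square algebra_simps)
  also have "\<dots> = 0"
    unfolding \<rho>_def power2_csqrt by (simp add: power2_eq_square algebra_simps)
  finally have "a * q^2 + of_real n * q = \<eta>" using D by simp
  moreover have "cmod q * n \<le> 2 * cmod \<eta>"
  proof -
    have "cmod q * n \<le> cmod q * cmod D" using nD by (rule mult_left_mono) simp
    also have "\<dots> = 2 * cmod \<eta>" using qD by (metis norm_mult norm_numeral)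
    finally show ?thesis .
  qed
  ultimately show ?thesis by (rule that)
qed

definition mat2 :: "complex \<Rightarrow> complex \<Rightarrow> complex \<Rightarrow> complex \<Rightarrow> cmat2" where
  "mat2 a b c d = (\<chi> i j. if i = 1 then (if j = 1 then a else b) else (if j = 1 then c else d))"

lemma mat2_nth [simp]:
  "mat2 a b c d $1$1 = a" "mat2 a b c d $1$2 = b" "mat2 a b c d $2$1 = c" "mat2 a b c d $2$2 = d"
  by (simp_all add: mat2_def)

lemma mat2_rank_one_idempotent:
  assumes disc: "\<alpha>^2 + b * c = 1/4"
  defines "Q \<equiv> mat2 (1/2 + \<alpha>) b c (1/2 - \<alpha>)"
  shows "Q ** Q = Q" "crank Q = 1" "trace Q = 1" "traceless_disc Q = 1/4"
proof -
  have "(1/2 + \<alpha>) * (1/2 + \<alpha>) + b * c = 1/4 + \<alpha> + (\<alpha>^2 + b * c)"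
    "(1/2 - \<alpha>) * (1/2 - \<alpha>) + b * c = 1/4 - \<alpha> + (\<alpha>^2 + b * c)"
    by (simp_all add: power2_eq_square algebra_simps)
  then have "(1/2 + \<alpha>) * (1/2 + \<alpha>) + b * c = 1/2 + \<alpha>"
    "(1/2 - \<alpha>) * (1/2 - \<alpha>) + b * c = 1/2 - \<alpha>"
    unfolding disc by simp_all
  then have "(Q ** Q)$i$j = Q$i$j" for i j
    using exhaust_2[of i] exhaust_2[of j] by (auto simp: cmat2_mult_nth Q_def algebra_simps)
  then show "Q ** Q = Q" by (simp add: vec_eq_iff)
  show "crank Q = 1"
    using disc by (intro crank_eq_1_if_trace_det) (simp_all add: Q_def power2_eq_square algebra_simps)
  show "trace Q = 1" by (simp add: Q_def trace_cmat2)
  show "traceless_disc Q = 1/4"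
    using disc by (simp add: Q_def traceless_disc_def half_diag_gap_def)
qed

text \<open>With \<open>N\<close> the traceless part of \<open>X\<close>, the matrix \<open>Q\<close> below is \<open>I/2 + N + q N\<^sup>*\<close>, and the
  quadratic equation for \<open>q\<close> says precisely that \<open>traceless_disc Q = 1/4\<close>.\<close>
lemma rank_one_idempotent_correction:
  assumes q: "cnj (traceless_disc X) * q^2 + of_real (traceless_sqnorm X) * q = 1/4 - traceless_disc X"
  obtains Q where "Q ** Q = Q" "crank Q = 1" "trace Q = 1" "traceless_disc Q = 1/4"
    "(norm (X - Q))^2 = (cmod (trace X - 1))^2 / 2 + (cmod q)^2 * traceless_sqnorm X"
proof -
  define \<alpha> where "\<alpha> = half_diag_gap X"
  define b where "b = X$1$2"
  define c where "c = X$2$1"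
  define \<alpha>' where "\<alpha>' = \<alpha> + q * cnj \<alpha>"
  define b' where "b' = b + q * cnj c"
  define c' where "c' = c + q * cnj b"
  define Q where "Q = mat2 (1/2 + \<alpha>') b' c' (1/2 - \<alpha>')"
  have sqnorm: "complex_of_real (traceless_sqnorm X) = 2 * (\<alpha> * cnj \<alpha>) + b * cnj b + c * cnj c"
    by (simp add: traceless_sqnorm_def \<alpha>_def b_def c_def complex_norm_square[symmetric])
  have disc: "\<alpha>'^2 + b' * c' = 1/4"
  proof -
    have "\<alpha>'^2 + b' * c' = (\<alpha>^2 + b * c) + q * (2 * (\<alpha> * cnj \<alpha>) + b * cnj b + c * cnj c)
        + q^2 * cnj (\<alpha>^2 + b * c)"
      by (simp add: \<alpha>'_def b'_def c'_def power2_eq_square algebra_simps)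
    also have "\<dots> = traceless_disc X + q * of_real (traceless_sqnorm X) + q^2 * cnj (traceless_disc X)"
      unfolding sqnorm traceless_disc_def \<alpha>_def b_def c_def by simp
    also have "\<dots> = 1/4" using q by (simp add: algebra_simps)
    finally show ?thesis .
  qed
  note mat2_rank_one_idempotent[OF disc, folded Q_def]
  moreover have "(norm (X - Q))^2 = (cmod (trace X - 1))^2 / 2 + (cmod q)^2 * traceless_sqnorm X"
  proof -
    have tr: "trace (X - Q) = trace X - 1" by (simp add: Q_def trace_cmat2)
    have "half_diag_gap (X - Q) = - (q * cnj \<alpha>)"
      by (simp add: half_diag_gap_def Q_def \<alpha>'_def \<alpha>_def field_simps)
    moreover have "(X - Q)$1$2 = - (q * cnj c)" "(X - Q)$2$1 = - (q * cnj b)"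
      by (simp_all add: Q_def b'_def b_def c'_def c_def)
    ultimately have "traceless_sqnorm (X - Q) = (cmod q)^2 * traceless_sqnorm X"
      by (simp only: traceless_sqnorm_def[of "X - Q"])
        (simp add: traceless_sqnorm_def \<alpha>_def b_def c_def norm_mult power_mult_distrib algebra_simps)
    then show ?thesis using norm_sq_trace_traceless[of "X - Q"] tr by simp
  qed
  ultimately show ?thesis by (rule that)
qed

lemma exists_rank_one_idempotent_near:
  assumes tr: "cmod (trace X - 1) \<le> a" and disc: "cmod (4 * traceless_disc X - 1) \<le> b" and "b < 1"
  obtains Q where "Q ** Q = Q" "crank Q = 1" "trace Q = 1" "traceless_disc Q = 1/4"
    "(norm (X - Q))^2 \<le> a^2 / 2 + b^2 / (2 * (1 - b))"
proof -
  define \<nu> where "\<nu> = traceless_disc X"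
  define n where "n = traceless_sqnorm X"
  define \<eta> where "\<eta> = 1/4 - \<nu>"
  have \<eta>: "cmod \<eta> \<le> b / 4"
  proof -
    have "\<eta> = - (4 * \<nu> - 1) / 4" by (simp add: \<eta>_def)
    then have "cmod \<eta> = cmod (4 * \<nu> - 1) / 4" by (simp only: norm_divide norm_minus_cancel) simp
    then show ?thesis using disc by (simp add: \<nu>_def)
  qed
  have "1/4 - cmod \<eta> \<le> cmod \<nu>"
    using norm_triangle_ineq2[of "1/4" \<eta>] by (simp add: \<eta>_def)
  then have n: "(1 - b) / 2 \<le> n" using traceless_disc_le[of X] \<eta> by (simp add: n_def \<nu>_def)
  then have "0 < n" using \<open>b < 1\<close> by simp
  then obtain q where q: "cnj \<nu> * q^2 + of_real n * q = \<eta>" and qn: "cmod q * n \<le> 2 * cmod \<eta>"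
    by (rule small_quadratic_root)
  obtain Q where Q: "Q ** Q = Q" "crank Q = 1" "trace Q = 1" "traceless_disc Q = 1/4"
    and dist: "(norm (X - Q))^2 = (cmod (trace X - 1))^2 / 2 + (cmod q)^2 * n"
    using rank_one_idempotent_correction[of X q] q by (auto simp: \<nu>_def n_def \<eta>_def)
  have "(cmod q)^2 * n * ((1 - b) / 2) \<le> (cmod q)^2 * n * n"
    using n \<open>0 < n\<close> by (intro mult_left_mono) auto
  also have "\<dots> = (cmod q * n)^2" by (simp add: power2_eq_square)
  also have "\<dots> \<le> (b / 2)^2" using qn \<eta> \<open>0 < n\<close> by (intro power_mono) auto
  finally have "(cmod q)^2 * n \<le> b^2 / (2 * (1 - b))"
    using \<open>b < 1\<close> by (simp add: pos_le_divide_eq power_divide field_simps)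
  moreover have "(cmod (trace X - 1))^2 \<le> a^2" using tr by (intro power_mono) auto
  ultimately show ?thesis using that[OF Q] dist by simp
qed

lemma reflection_norm_sq_ge_two:
  assumes "trace Q = 1" "traceless_disc Q = 1/4"
  shows "2 \<le> (norm (mat 1 - Q - Q))^2"
  using reflection_norm_sq[of Q] traceless_disc_le[of Q] assms by simp

section \<open>Approximate representations of a semilattice\<close>

lemma norm_add4_le: "norm (a + b + c + d) \<le> norm a + norm b + norm c + norm d"
  using norm_triangle_ineq[of "a + b + c" d] norm_triangle_ineq[of "a + b" c] norm_triangle_ineq[of a b]
  by linarith

lemma sq_diff_defect_eq:
  "((X::cmat2) - Y) ** (X - Y) - (X - Y) = (X ** X - X) + - (X ** Y - Y) + - (Y ** X - Y) + (Y ** Y - Y)"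
  by (simp add: vec_eq_iff forall_2 cmat2_mult_nth algebra_simps)

lemma complement_sum_defect_eq:
  "(mat 1 - (X::cmat2) - Y) ** (mat 1 - X - Y) - (mat 1 - X - Y)
     = (X ** X - X) + (Y ** Y - Y) + (X ** Y - G) + (Y ** X - G) + 2 *\<^sub>R G"
  by (simp add: vec_eq_iff forall_2 cmat2_mult_nth mat_one_cmat2_nth scaleR_2 algebra_simps)

locale approx_semilattice_rep = semilattice mul
  for mul :: "'a \<Rightarrow> 'a \<Rightarrow> 'a" +
  fixes \<theta> :: "'a \<Rightarrow> cmat2" and \<delta> :: real
  assumes delta_nonneg: "0 \<le> \<delta>" and delta_small: "\<delta> \<le> 3/100"
    and approx: "\<And>e f. norm (\<theta> e ** \<theta> f - \<theta> (mul e f)) \<le> \<delta>"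
begin

lemma delta_sq_small: "\<delta>^2 \<le> 9/10000"
  using power_mono[OF delta_small delta_nonneg, of 2] by (simp add: power2_eq_square)

lemma idem_defect: "norm (\<theta> x ** \<theta> x - \<theta> x) \<le> \<delta>"
  using approx[of x x] by simp

lemma trace_near_index: "\<exists>k\<in>{0, 1, 2}. cmod (trace (\<theta> x) - of_nat k) \<le> 147/100 * \<delta>"
  using delta_nonneg delta_small
  by (intro trace_near_integer[OF idem_defect[of x], of "32/1000"])
    (simp_all add: power_mult_distrib power_divide)

lemma Sk_trace:
  assumes "x \<in> Sk \<theta> k"
  shows "cmod (trace (\<theta> x) - of_nat k) \<le> 147/100 * \<delta>"
proof -
  obtain j where j: "cmod (trace (\<theta> x) - of_nat j) \<le> 147/100 * \<delta>"
    using trace_near_index by blast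
  moreover have "cmod (trace (\<theta> x) - of_nat k) < 95/100" using assms by (simp add: Sk_def)
  ultimately have "j = k" using delta_small by (intro of_nat_eq_if_close[of "trace (\<theta> x)"]) simp
  with j show ?thesis by simp
qed

lemma Sk_cover: "\<exists>k\<in>{0, 1, 2}. x \<in> Sk \<theta> k"
  using trace_near_index[of x] delta_small by (auto simp: Sk_def)

lemma Sk1_trace_disc:
  assumes "x \<in> Sk \<theta> 1"
  shows "cmod (trace (\<theta> x) - 1) \<le> 147/100 * \<delta>" "cmod (4 * traceless_disc (\<theta> x) - 1) \<le> 301/100 * \<delta>"
proof -
  have hyps: "norm (\<theta> x ** \<theta> x - \<theta> x) \<le> \<delta>" "(32/1000::real) \<le> 1/2" "\<delta> \<le> 32/1000 * (1 - 32/1000)"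
    "2 * \<delta>^2 \<le> ((1 - 32/1000) * (147/100 * \<delta>))^2" "0 \<le> 147/100 * \<delta>"
    "cmod (trace (\<theta> x) - 1) < 1 - 147/100 * \<delta>"
    using idem_defect delta_nonneg delta_small assms by (simp_all add: Sk_def power_mult_distrib power_divide)
  show "cmod (trace (\<theta> x) - 1) \<le> 147/100 * \<delta>" by (rule trace_near_one(1)[OF hyps])
  have "cmod (4 * traceless_disc (\<theta> x) - 1) \<le> 147/100 * \<delta> * (2 + 147/100 * \<delta>)"
    by (rule trace_near_one(2)[OF hyps])
  also have "\<dots> = 294/100 * \<delta> + 21609/10000 * (\<delta> * \<delta>)" by (simp add: algebra_simps)
  also have "\<dots> \<le> 301/100 * \<delta>" using mult_right_mono[OF delta_small delta_nonneg] delta_nonneg by linarith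
  finally show "cmod (4 * traceless_disc (\<theta> x) - 1) \<le> 301/100 * \<delta>" .
qed

lemma reflection_far: "13/10 \<le> dist (\<theta> x) (mat 1 - \<theta> x)"
proof -
  have "2 * (1 - 2 * (32/1000))^2 \<le> (norm (mat 1 - \<theta> x - \<theta> x))^2"
    using delta_small by (intro approx_idempotent_reflection_far[OF idem_defect[of x]]) simp_all
  then have "(13/10)^2 \<le> (norm (mat 1 - \<theta> x - \<theta> x))^2" by (simp add: power2_eq_square)
  then have "13/10 \<le> norm (mat 1 - \<theta> x - \<theta> x)" by (rule power2_le_imp_le) simp
  then show ?thesis by (simp add: dist_norm norm_minus_commute algebra_simps)
qed

lemma Sk0_norm:
  assumes "x \<in> Sk \<theta> 0"
  shows "norm (\<theta> x) \<le> 105/100 * \<delta>"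
proof -
  have "cmod (trace (\<theta> x)) \<le> 441/10000" using Sk_trace[OF assms] delta_small by simp
  then have "norm (\<theta> x) \<le> \<delta> / (955/1000)" using delta_small
    by (intro approx_idempotent_norm_le[OF idem_defect[of x], of "32/1000" "441/10000"]) simp_all
  also have "\<dots> \<le> 105/100 * \<delta>" using delta_nonneg by simp
  finally show ?thesis .
qed

lemma below_diff_defect:
  assumes "mul x y = y"
  shows "norm ((\<theta> x - \<theta> y) ** (\<theta> x - \<theta> y) - (\<theta> x - \<theta> y)) \<le> 4 * \<delta>"
proof -
  have "norm (\<theta> x ** \<theta> y - \<theta> y) \<le> \<delta>" "norm (\<theta> y ** \<theta> x - \<theta> y) \<le> \<delta>"
    using approx[of x y] approx[of y x] assms commute by simp_all
  then show ?thesis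
    unfolding sq_diff_defect_eq
    using norm_add4_le[of "\<theta> x ** \<theta> x - \<theta> x" "- (\<theta> x ** \<theta> y - \<theta> y)" "- (\<theta> y ** \<theta> x - \<theta> y)"
        "\<theta> y ** \<theta> y - \<theta> y"] idem_defect[of x] idem_defect[of y]
    unfolding norm_minus_cancel by linarith
qed

text \<open>If \<open>y \<le> x\<close> in the semilattice order then \<open>\<theta> x - \<theta> y\<close> is again an approximate idempotent,
  so \<open>trace (\<theta> x) - trace (\<theta> y)\<close> is close to a natural number.\<close>
lemma Sk_index_mono:
  assumes "mul x y = y" "x \<in> Sk \<theta> kx" "y \<in> Sk \<theta> ky"
  shows "ky \<le> kx"
proof -
  have "\<exists>j\<in>{0, 1, 2}. cmod (trace (\<theta> x - \<theta> y) - of_nat j) \<le> 2/10"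
    using delta_nonneg delta_small delta_sq_small
    by (intro trace_near_integer[OF below_diff_defect[OF assms(1)], of "143/1000"])
      (simp_all add: power_mult_distrib power_divide)
  then obtain j where j: "cmod (trace (\<theta> x - \<theta> y) - of_nat j) \<le> 2/10" by blast
  have "cmod (trace (\<theta> x) - of_nat (ky + j))
      \<le> cmod (trace (\<theta> y) - of_nat ky) + cmod (trace (\<theta> x - \<theta> y) - of_nat j)"
    using norm_triangle_ineq[of "trace (\<theta> y) - of_nat ky" "trace (\<theta> x - \<theta> y) - of_nat j"]
    by (simp add: trace_sub algebra_simps)
  then have "cmod (trace (\<theta> x) - of_nat kx) + cmod (trace (\<theta> x) - of_nat (ky + j)) < 1"
    using j Sk_trace[OF assms(2)] Sk_trace[OF assms(3)] delta_small by linarith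
  then have "kx = ky + j" by (rule of_nat_eq_if_close)
  then show ?thesis by simp
qed

lemma Sk_same_dist:
  assumes "mul x y = y" "x \<in> Sk \<theta> k" "y \<in> Sk \<theta> k"
  shows "dist (\<theta> x) (\<theta> y) \<le> 467/100 * \<delta>"
proof -
  have "cmod (trace (\<theta> x - \<theta> y)) \<le> cmod (trace (\<theta> x) - of_nat k) + cmod (trace (\<theta> y) - of_nat k)"
    using norm_triangle_ineq4[of "trace (\<theta> x) - of_nat k" "trace (\<theta> y) - of_nat k"]
    by (simp add: trace_sub)
  then have "cmod (trace (\<theta> x - \<theta> y)) \<le> 882/10000"
    using Sk_trace[OF assms(2)] Sk_trace[OF assms(3)] delta_small by linarith
  then have "norm (\<theta> x - \<theta> y) \<le> 4 * \<delta> / (857/1000)" using delta_small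
    by (intro approx_idempotent_norm_le[OF below_diff_defect[OF assms(1)], of "143/1000" "882/10000"])
      simp_all
  also have "\<dots> \<le> 467/100 * \<delta>" using delta_nonneg by simp
  finally show ?thesis by (simp add: dist_norm)
qed

text \<open>If \<open>ef \<in> S\<^sub>0\<close> then \<open>\<theta> e \<theta> f \<approx> 0\<close>, which makes \<open>I - \<theta> e - \<theta> f\<close> an approximate
  idempotent of small trace, hence small.\<close>
lemma Sk1_mul_Sk0_dist:
  assumes "e \<in> Sk \<theta> 1" "f \<in> Sk \<theta> 1" "mul e f \<in> Sk \<theta> 0"
  shows "dist (\<theta> f) (mat 1 - \<theta> e) \<le> 823/100 * \<delta>"
proof -
  let ?G = "\<theta> (mul e f)" and ?Y = "mat 1 - \<theta> e - \<theta> f"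
  have "norm (\<theta> e ** \<theta> f - ?G) \<le> \<delta>" "norm (\<theta> f ** \<theta> e - ?G) \<le> \<delta>"
    using approx[of e f] approx[of f e] commute by simp_all
  moreover have "norm (2 *\<^sub>R ?G) \<le> 2 * (105/100 * \<delta>)" using Sk0_norm[OF assms(3)] by simp
  ultimately have defect: "norm (?Y ** ?Y - ?Y) \<le> 61/10 * \<delta>"
    unfolding complement_sum_defect_eq[of "\<theta> e" "\<theta> f" ?G]
    using norm_add4_le[of "\<theta> e ** \<theta> e - \<theta> e" "\<theta> f ** \<theta> f - \<theta> f" "\<theta> e ** \<theta> f - ?G" "\<theta> f ** \<theta> e - ?G"]
      norm_triangle_ineq[of "(\<theta> e ** \<theta> e - \<theta> e) + (\<theta> f ** \<theta> f - \<theta> f) + (\<theta> e ** \<theta> f - ?G)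
        + (\<theta> f ** \<theta> e - ?G)" "2 *\<^sub>R ?G"] idem_defect[of e] idem_defect[of f]
    by linarith
  have "trace ?Y = - ((trace (\<theta> e) - 1) + (trace (\<theta> f) - 1))" by (simp add: trace_cmat2 mat_one_cmat2_nth)
  then have "cmod (trace ?Y) \<le> cmod (trace (\<theta> e) - 1) + cmod (trace (\<theta> f) - 1)"
    using norm_triangle_ineq[of "trace (\<theta> e) - 1" "trace (\<theta> f) - 1"] by (simp only: norm_minus_cancel)
  then have "cmod (trace ?Y) \<le> 882/10000"
    using Sk_trace[OF assms(1)] Sk_trace[OF assms(2)] delta_small by simp
  then have "norm ?Y \<le> 61/10 * \<delta> / (742/1000)" using delta_small
    by (intro approx_idempotent_norm_le[OF defect, of "258/1000" "882/10000"]) simp_all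
  also have "\<dots> \<le> 823/100 * \<delta>" using delta_nonneg by simp
  finally show ?thesis by (simp add: dist_norm norm_minus_commute algebra_simps)
qed

lemma Sk1_mul_cases:
  assumes "x \<in> Sk \<theta> 1"
  shows "mul x y \<in> Sk \<theta> 0 \<or> mul x y \<in> Sk \<theta> 1"
proof -
  obtain k where k: "k \<in> {0, 1, 2}" "mul x y \<in> Sk \<theta> k" using Sk_cover by blast
  have "k \<le> 1" by (rule Sk_index_mono[OF left_idem assms k(2)])
  then show ?thesis using k by auto
qed

lemma Sk1_between:
  assumes "x \<in> Sk \<theta> 1" "z \<in> Sk \<theta> 1" "mul x y = y" "mul y z = z"
  shows "y \<in> Sk \<theta> 1"
proof -
  obtain k where k: "k \<in> {0, 1, 2}" "y \<in> Sk \<theta> k" using Sk_cover by blast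
  have "k \<le> 1" by (rule Sk_index_mono[OF assms(3,1) k(2)])
  moreover have "1 \<le> k" by (rule Sk_index_mono[OF assms(4) k(2) assms(2)])
  ultimately show ?thesis using k by simp
qed

lemma Sk0_below:
  assumes "x \<in> Sk \<theta> 0" "mul x y = y"
  shows "y \<in> Sk \<theta> 0"
proof -
  obtain k where k: "k \<in> {0, 1, 2}" "y \<in> Sk \<theta> k" using Sk_cover by blast
  have "k \<le> 0" by (rule Sk_index_mono[OF assms(2,1) k(2)])
  then show ?thesis using k by simp
qed

lemma exists_anchor_projection:
  assumes "e0 \<in> Sk \<theta> 1"
  obtains P where "P ** P = P" "crank P = 1" "dist (\<theta> e0) P \<le> 247/100 * \<delta>" "7/5 \<le> dist P (mat 1 - P)"
proof -
  have b: "301/100 * \<delta> < 1" using delta_small by simp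
  obtain P where P: "P ** P = P" "crank P = 1" "trace P = 1" "traceless_disc P = 1/4"
    and close: "(norm (\<theta> e0 - P))^2 \<le> (147/100 * \<delta>)^2 / 2 + (301/100 * \<delta>)^2 / (2 * (1 - 301/100 * \<delta>))"
    using exists_rank_one_idempotent_near[OF Sk1_trace_disc[OF assms] b] by blast
  have "(301/100 * \<delta>)^2 / (2 * (1 - 301/100 * \<delta>)) \<le> (301/100 * \<delta>)^2 / (18194/10000)"
    using delta_small by (intro divide_left_mono) simp_all
  then have "(norm (\<theta> e0 - P))^2 \<le> (147/100 * \<delta>)^2 / 2 + (301/100 * \<delta>)^2 / (18194/10000)"
    using close by linarith
  also have "\<dots> \<le> (247/100 * \<delta>)^2"
    by (simp add: power_mult_distrib power_divide)
  finally have "(norm (\<theta> e0 - P))^2 \<le> (247/100 * \<delta>)^2" .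
  then have "norm (\<theta> e0 - P) \<le> 247/100 * \<delta>"
    by (rule power2_le_imp_le) (simp add: delta_nonneg)
  then have "dist (\<theta> e0) P \<le> 247/100 * \<delta>" by (simp add: dist_norm)
  moreover have "(7/5)^2 \<le> (norm (mat 1 - P - P))^2"
    using reflection_norm_sq_ge_two[OF P(3,4)] by (simp add: power2_eq_square)
  then have "7/5 \<le> norm (mat 1 - P - P)" by (rule power2_le_imp_le) simp
  then have "7/5 \<le> dist P (mat 1 - P)" by (simp add: dist_norm norm_minus_commute algebra_simps)
  ultimately show ?thesis using P(1,2) that by blast
qed

end


locale anchored_rep = approx_semilattice_rep +
  fixes e0 :: 'a and P :: cmat2
  assumes anchor: "e0 \<in> Sk \<theta> 1"
    and anchor_close: "dist (\<theta> e0) P \<le> 247/100 * \<delta>"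
    and projection_far: "7/5 \<le> dist P (mat 1 - P)"
begin

lemma cballs_disjoint: "cball P (12 * \<delta>) \<inter> cball (mat 1 - P) (12 * \<delta>) = {}"
proof -
  have False if "dist P B \<le> 12 * \<delta>" "dist (mat 1 - P) B \<le> 12 * \<delta>" for B
    using that projection_far delta_small by metric
  then show ?thesis by auto
qed

lemma anchor_dist:
  assumes "x \<in> Sk \<theta> 1" "mul e0 x \<in> Sk \<theta> 1"
  shows "dist (\<theta> e0) (\<theta> x) \<le> 934/100 * \<delta>"
proof -
  have "dist (\<theta> e0) (\<theta> (mul e0 x)) \<le> 467/100 * \<delta>" by (rule Sk_same_dist[OF left_idem anchor assms(2)])
  moreover have "dist (\<theta> x) (\<theta> (mul e0 x)) \<le> 467/100 * \<delta>"
    by (rule Sk_same_dist[OF _ assms]) (metis left_commute idem)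
  ultimately show ?thesis by metric
qed

lemma in_cball_P:
  assumes "x \<in> Sk \<theta> 1" "mul e0 x \<in> Sk \<theta> 1"
  shows "\<theta> x \<in> cball P (12 * \<delta>)"
  using anchor_dist[OF assms] anchor_close delta_nonneg dist_triangle3[of P "\<theta> x" "\<theta> e0"]
  by (simp add: dist_commute)

lemma in_cball_Q:
  assumes "x \<in> Sk \<theta> 1" "mul e0 x \<in> Sk \<theta> 0"
  shows "\<theta> x \<in> cball (mat 1 - P) (12 * \<delta>)"
proof -
  have "dist (\<theta> x) (mat 1 - \<theta> e0) \<le> 823/100 * \<delta>" by (rule Sk1_mul_Sk0_dist[OF anchor assms])
  moreover have "dist (mat 1 - P) (mat 1 - \<theta> e0) = dist P (\<theta> e0)" by (rule dist_complement)
  ultimately have "dist (mat 1 - P) (\<theta> x) \<le> 12 * \<delta>"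
    using anchor_close delta_nonneg by metric
  then show ?thesis by simp
qed

lemma cball_P_iff:
  assumes "x \<in> Sk \<theta> 1"
  shows "\<theta> x \<in> cball P (12 * \<delta>) \<longleftrightarrow> mul e0 x \<in> Sk \<theta> 1"
  using Sk1_mul_cases[OF anchor, of x] in_cball_P[OF assms] in_cball_Q[OF assms] cballs_disjoint
  by blast

lemma cball_Q_iff:
  assumes "x \<in> Sk \<theta> 1"
  shows "\<theta> x \<in> cball (mat 1 - P) (12 * \<delta>) \<longleftrightarrow> mul e0 x \<in> Sk \<theta> 0"
  using Sk1_mul_cases[OF anchor, of x] in_cball_P[OF assms] in_cball_Q[OF assms] cballs_disjoint
  by blast

lemma Sk1_image_subset: "\<theta> ` Sk \<theta> 1 \<subseteq> cball P (12 * \<delta>) \<union> cball (mat 1 - P) (12 * \<delta>)"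
  using Sk1_mul_cases[OF anchor] in_cball_P in_cball_Q by blast

lemma mul_closed_cball_P:
  assumes "e \<in> Sk \<theta> 1" "f \<in> Sk \<theta> 1" "\<theta> e \<in> cball P (12 * \<delta>)" "\<theta> f \<in> cball P (12 * \<delta>)"
  shows "\<theta> (mul e f) \<in> cball P (12 * \<delta>)"
proof -
  have e: "mul e0 e \<in> Sk \<theta> 1" and f: "mul e0 f \<in> Sk \<theta> 1" using cball_P_iff assms by blast+
  have split: "mul (mul e0 e) (mul e0 f) = mul e0 (mul e f)" by (metis assoc left_commute left_idem)
  have "mul e0 (mul e f) \<in> Sk \<theta> 1"
  proof (rule ccontr)
    assume "mul e0 (mul e f) \<notin> Sk \<theta> 1"
    then have "mul (mul e0 e) (mul e0 f) \<in> Sk \<theta> 0"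
      using Sk1_mul_cases[OF e, of "mul e0 f"] unfolding split by blast
    then have "dist (\<theta> (mul e0 f)) (mat 1 - \<theta> (mul e0 e)) \<le> 823/100 * \<delta>"
      by (rule Sk1_mul_Sk0_dist[OF e f])
    moreover have "dist (\<theta> e0) (\<theta> (mul e0 e)) \<le> 467/100 * \<delta>" "dist (\<theta> e0) (\<theta> (mul e0 f)) \<le> 467/100 * \<delta>"
      using Sk_same_dist[OF left_idem anchor] e f by blast+
    moreover have "dist (mat 1 - \<theta> (mul e0 e)) (mat 1 - \<theta> e0) = dist (\<theta> (mul e0 e)) (\<theta> e0)"
      by (rule dist_complement)
    ultimately have "dist (\<theta> e0) (mat 1 - \<theta> e0) \<le> 1757/100 * \<delta>" by metric
    then show False using reflection_far[of e0] delta_small by linarith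
  qed
  moreover have "mul e f \<in> Sk \<theta> 1"
    by (rule Sk1_between[OF assms(1) \<open>mul e0 (mul e f) \<in> Sk \<theta> 1\<close> left_idem])
      (metis left_commute idem)
  ultimately show ?thesis using in_cball_P by blast
qed

lemma mul_closed_cball_Q:
  assumes "e \<in> Sk \<theta> 1" "f \<in> Sk \<theta> 1"
    and "\<theta> e \<in> cball (mat 1 - P) (12 * \<delta>)" "\<theta> f \<in> cball (mat 1 - P) (12 * \<delta>)"
  shows "\<theta> (mul e f) \<in> cball (mat 1 - P) (12 * \<delta>)"
proof -
  have e: "mul e0 e \<in> Sk \<theta> 0" and f: "mul e0 f \<in> Sk \<theta> 0" using cball_Q_iff assms by blast+
  have "mul e0 (mul e f) \<in> Sk \<theta> 0" by (rule Sk0_below[OF e]) (metis assoc left_commute left_idem)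
  moreover have "mul e f \<in> Sk \<theta> 1"
  proof (rule ccontr)
    assume "mul e f \<notin> Sk \<theta> 1"
    then have "mul e f \<in> Sk \<theta> 0" using Sk1_mul_cases[OF assms(1)] by blast
    then have "dist (\<theta> f) (mat 1 - \<theta> e) \<le> 823/100 * \<delta>" by (rule Sk1_mul_Sk0_dist[OF assms(1,2)])
    moreover have "dist (\<theta> e) (mat 1 - \<theta> e0) \<le> 823/100 * \<delta>" "dist (\<theta> f) (mat 1 - \<theta> e0) \<le> 823/100 * \<delta>"
      using Sk1_mul_Sk0_dist[OF anchor] assms(1,2) e f by blast+
    ultimately have "dist (\<theta> e) (mat 1 - \<theta> e) \<le> 2469/100 * \<delta>" by metric
    then show False using reflection_far[of e] delta_small by linarith
  qed
  ultimately show ?thesis using in_cball_Q by blast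
qed

lemma mul_cross_Sk0:
  assumes "e \<in> Sk \<theta> 1" "f \<in> Sk \<theta> 1"
    and "\<theta> e \<in> cball P (12 * \<delta>)" "\<theta> f \<in> cball (mat 1 - P) (12 * \<delta>)"
  shows "mul e f \<in> Sk \<theta> 0"
proof (rule ccontr)
  assume "mul e f \<notin> Sk \<theta> 0"
  then have ef: "mul e f \<in> Sk \<theta> 1" using Sk1_mul_cases[OF assms(1)] by blast
  have "mul e0 e \<in> Sk \<theta> 1" "mul e0 f \<in> Sk \<theta> 0" using cball_P_iff cball_Q_iff assms by blast+
  then have "dist (\<theta> e0) (\<theta> e) \<le> 934/100 * \<delta>" "dist (\<theta> f) (mat 1 - \<theta> e0) \<le> 823/100 * \<delta>"
    using anchor_dist Sk1_mul_Sk0_dist[OF anchor] assms(1,2) by blast+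
  moreover have "dist (\<theta> e) (\<theta> (mul e f)) \<le> 467/100 * \<delta>" by (rule Sk_same_dist[OF left_idem assms(1) ef])
  moreover have "dist (\<theta> f) (\<theta> (mul e f)) \<le> 467/100 * \<delta>"
    by (rule Sk_same_dist[OF _ assms(2) ef]) (metis left_commute idem)
  ultimately have "dist (\<theta> e0) (mat 1 - \<theta> e0) \<le> 2691/100 * \<delta>" by metric
  then show False using reflection_far[of e0] delta_small by linarith
qed

end

theorem propositionp:
  fixes mul :: "'a \<Rightarrow> 'a \<Rightarrow> 'a"
    and \<theta> :: "'a \<Rightarrow> complex^2^2"
    and \<delta> :: real
  assumes semilat: "semilattice mul"
    and delta: "0 \<le> \<delta>" "\<delta> < 0.03"
    and approx: "\<And>e f. hs_norm (\<theta> e ** \<theta> f - \<theta> (mul e f)) \<le> \<delta>"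
    and nonempty: "Sk \<theta> 1 \<noteq> {}"
  shows "\<exists>P :: complex^2^2. P ** P = P \<and> crank P = 1
     \<and> hs_cball P (12 * \<delta>) \<inter> hs_cball (mat 1 - P) (12 * \<delta>) = {}
     \<and> \<theta> ` Sk \<theta> 1 \<subseteq> hs_cball P (12 * \<delta>) \<union> hs_cball (mat 1 - P) (12 * \<delta>)
     \<and> (\<forall>e\<in>Sk \<theta> 1. \<forall>f\<in>Sk \<theta> 1.
          (\<theta> e \<in> hs_cball P (12 * \<delta>) \<and> \<theta> f \<in> hs_cball P (12 * \<delta>)
             \<longrightarrow> \<theta> (mul e f) \<in> hs_cball P (12 * \<delta>))
        \<and> (\<theta> e \<in> hs_cball (mat 1 - P) (12 * \<delta>) \<and> \<theta> f \<in> hs_cball (mat 1 - P) (12 * \<delta>)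
             \<longrightarrow> \<theta> (mul e f) \<in> hs_cball (mat 1 - P) (12 * \<delta>))
        \<and> (\<theta> e \<in> hs_cball P (12 * \<delta>) \<and> \<theta> f \<in> hs_cball (mat 1 - P) (12 * \<delta>)
             \<longrightarrow> mul e f \<in> Sk \<theta> 0))"
proof -
  have rep: "approx_semilattice_rep mul \<theta> \<delta>"
    using semilat delta approx
    by (intro approx_semilattice_rep.intro approx_semilattice_rep_axioms.intro)
      (simp_all add: hs_norm_eq_norm)
  interpret approx_semilattice_rep mul \<theta> \<delta> by (rule rep)
  obtain e0 where e0: "e0 \<in> Sk \<theta> 1" using nonempty by blast
  obtain P where P: "P ** P = P" "crank P = 1" "dist (\<theta> e0) P \<le> 247/100 * \<delta>" "7/5 \<le> dist P (mat 1 - P)"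
    by (rule exists_anchor_projection[OF e0])
  interpret anchored_rep mul \<theta> \<delta> e0 P
    by (intro anchored_rep.intro[OF rep] anchored_rep_axioms.intro e0 P(3,4))
  show ?thesis
    unfolding hs_cball_eq_cball
    using mul_closed_cball_P mul_closed_cball_Q mul_cross_Sk0
    by (intro exI[of _ P] conjI ballI impI P(1,2) cballs_disjoint Sk1_image_subset) blast+
qed

end
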